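(* Let $G$ be a connected Lie group with Lie algebra $\mathfrak{su}(2)\oplus\mathbb{R}$ having basis $E_1,E_2,E_3,E_4$ with $[E_1,E_2]=E_3$, $[E_2,E_3]=E_1$, $[E_3,E_1]=E_2$, $[E_i,E_4]=0$ ($i=1,2,3$). Let $i\in\{1,2\}$, with $e_1=E_1$, $e_3=E_2$, $e_4=E_3$, and $e_2=E_4-E_3$ if $i=1$, $e_2=E_4$ if $i=2$. For $\alpha_1^2+\alpha_2^2+\alpha_3^2=1$, $\beta\in\mathbb{R}$ let $$\gamma_i(\alpha_1,\alpha_2,\alpha_3,\beta;t)=\exp\bigl(t(\alpha_1e_1+\alpha_2e_2+\alpha_3e_3+\beta e_4)\bigr)\exp(-t\beta e_4),\quad t\in\mathbb{R}.$$ Then for every $t_0,t\in\mathbb{R}$, $$\gamma_i(t_0)^{-1}\gamma_i(t)=\gamma_i(\alpha_1\cos\beta t_0-\alpha_3\sin\beta t_0,\ \alpha_2,\ \alpha_1\sin\beta t_0+\alpha_3\cos\beta t_0,\ \beta;\ t-t_0),$$ where $\gamma_i(s)$ abbreviates $\gamma_i(\alpha_1,\alpha_2,\alpha_3,\beta;s)$. *)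

theory Defs
  imports "HOL-Analysis.Analysis" "HOL-Algebra.Group"
begin

type_synonym cmat2 = "complex ^ 2 ^ 2"

(* Lie algebra su(2) (+) R, realised inside gl(2,C) x R *)
type_synonym lie_elt = "cmat2 \<times> real"

fun mpow :: "cmat2 \<Rightarrow> nat \<Rightarrow> cmat2" where
  "mpow A 0 = mat 1"
| "mpow A (Suc n) = A ** mpow A n"

definition mexp :: "cmat2 \<Rightarrow> cmat2" where
  "mexp A = (\<Sum>n. (1 / fact n) *\<^sub>R mpow A n)"

definition conj_transpose :: "cmat2 \<Rightarrow> cmat2" where
  "conj_transpose A = (\<chi> i j. cnj (A $ j $ i))"

(* the simply connected Lie group SU(2) x R with componentwise product *)
definition SU2R :: "(cmat2 \<times> real) monoid" where
  "SU2R = \<lparr> carrier = {(A, r). conj_transpose A ** A = mat 1 \<and> det A = 1},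
            mult = (\<lambda>(A, r) (B, s). (A ** B, r + s)),
            one = (mat 1, 0) \<rparr>"

definition lexp :: "lie_elt \<Rightarrow> cmat2 \<times> real" where
  "lexp X = (mexp (fst X), snd X)"

(* basis E_k = -(i/2) sigma_k of su(2) (sigma_k Pauli matrices), and E_4 spanning R;
   [E1,E2]=E3, [E2,E3]=E1, [E3,E1]=E2, E4 central *)
definition E1 :: lie_elt where
  "E1 = (vector [vector [0, -\<i>/2], vector [-\<i>/2, 0]], 0)"
definition E2 :: lie_elt where
  "E2 = (vector [vector [0, -1/2], vector [1/2, 0]], 0)"
definition E3 :: lie_elt where
  "E3 = (vector [vector [-\<i>/2, 0], vector [0, \<i>/2]], 0)"
definition E4 :: lie_elt where
  "E4 = (0, 1)"

definition frame_e :: "nat \<Rightarrow> nat \<Rightarrow> lie_elt" where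
  "frame_e i k = (if k = 1 then E1
                  else if k = 2 then (if i = 1 then E4 - E3 else E4)
                  else if k = 3 then E2
                  else E3)"

(* gamma_i(a1,a2,a3,b;t) in a group G that is the image of SU(2) x R under pi *)
definition gamma :: "('g, 'm) monoid_scheme \<Rightarrow> (cmat2 \<times> real \<Rightarrow> 'g) \<Rightarrow> nat
    \<Rightarrow> real \<Rightarrow> real \<Rightarrow> real \<Rightarrow> real \<Rightarrow> real \<Rightarrow> 'g" where
  "gamma G \<pi> i a1 a2 a3 b t =
     \<pi> (lexp (t *\<^sub>R (a1 *\<^sub>R frame_e i 1 + a2 *\<^sub>R frame_e i 2 + a3 *\<^sub>R frame_e i 3
                     + b *\<^sub>R frame_e i 4)))
     \<otimes>\<^bsub>G\<^esub> \<pi> (lexp ((- t * b) *\<^sub>R frame_e i 4))"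

end

theory Submission
  imports Defs
begin

text \<open>
  Write \<open>F\<close> for the matrix part of \<open>E3\<close>, so that \<open>\<gamma>(t) = (exp (t N) exp (-t b F), t a2)\<close>
  in \<open>SU(2) \<times> \<real>\<close> with \<open>N = a1 E1 + a3 E2 + c E3\<close> (\<open>c = b - a2\<close> if \<open>i = 1\<close>, else
  \<open>c = b\<close>). Every \<open>N \<in> su(2)\<close> squares to \<open>-\<rho>\<^sup>2 I\<close>, so
  \<open>exp (t N) = cos (\<rho> t) I + (sin (\<rho> t) / \<rho>) N\<close>; this gives the one-parameter law
  \<open>exp (s N) exp (t N) = exp ((s + t) N)\<close>. Conjugation by \<open>exp (-\<theta> F)\<close> rotates the
  \<open>(E1, E2)\<close>-plane by \<open>\<theta>\<close>, so \<open>exp (-\<theta> F)\<close> can be moved past \<open>exp (s N')\<close>, \<open>N'\<close> the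
  rotated element, turning it into \<open>exp (s N)\<close>. With \<open>\<theta> = b t0\<close> this yields
  \<open>\<gamma>(t0) \<gamma>'(t - t0) = \<gamma>(t)\<close> already in \<open>SU(2) \<times> \<real>\<close>, and the homomorphism \<open>\<pi>\<close> carries
  it to \<open>G\<close>.
\<close>

lemma matrix_add_rdistrib: "(B + C) ** A = B ** A + C ** A"
  by (vector matrix_matrix_mult_def sum.distrib[symmetric] field_simps)

definition su2 :: "real \<Rightarrow> real \<Rightarrow> real \<Rightarrow> cmat2" where
  "su2 x y z = x *\<^sub>R fst E1 + y *\<^sub>R fst E2 + z *\<^sub>R fst E3"

lemma cmat2_eq_iff:
  "(A :: cmat2) = B \<longleftrightarrow> A$1$1 = B$1$1 \<and> A$1$2 = B$1$2 \<and> A$2$1 = B$2$1 \<and> A$2$2 = B$2$2"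
  by (auto simp: vec_eq_iff forall_2)

lemma cmat2_mult_nth: "((A :: cmat2) ** B)$i$j = A$i$1 * B$1$j + A$i$2 * B$2$j"
  by (simp add: matrix_matrix_mult_def sum_2)

lemma cmat2_mat_nth:
  "(mat c :: cmat2)$1$1 = c" "(mat c :: cmat2)$1$2 = 0"
  "(mat c :: cmat2)$2$1 = 0" "(mat c :: cmat2)$2$2 = c"
  by (simp_all add: mat_def)

lemma su2_nth:
  "su2 x y z $1$1 = - \<i> * z / 2" "su2 x y z $1$2 = (- \<i> * x - y) / 2"
  "su2 x y z $2$1 = (- \<i> * x + y) / 2" "su2 x y z $2$2 = \<i> * z / 2"
  by (simp_all add: su2_def E1_def E2_def E3_def vector_scaleR_component
      scaleR_conv_of_real[where 'a=complex] field_simps)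

lemmas cmat2_simps = cmat2_eq_iff cmat2_mult_nth cmat2_mat_nth su2_nth
  vector_scaleR_component scaleR_conv_of_real[where 'a=complex] complex_eq_iff

lemma scaleR_su2: "t *\<^sub>R su2 x y z = su2 (t * x) (t * y) (t * z)"
  by (simp add: su2_def algebra_simps)

lemma su2_square: "su2 x y z ** su2 x y z = (- (sqrt (x\<^sup>2 + y\<^sup>2 + z\<^sup>2) / 2)\<^sup>2) *\<^sub>R mat 1"
  by (simp add: cmat2_simps power_divide field_simps power2_eq_square)

lemma mpow_square_scalar:
  assumes sq: "A ** A = c *\<^sub>R mat 1"
  shows "mpow A n = c ^ (n div 2) *\<^sub>R (if even n then mat 1 else A)"
proof (induction n)
  case 0
  then show ?case by simp
next
  case (Suc n)
  show ?case
  proof (cases "even n")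
    case True
    then show ?thesis using Suc by (simp add: matrix_scalar_ac)
  next
    case False
    then have "Suc n div 2 = Suc (n div 2)" by presburger
    then show ?thesis using Suc False
      by (simp add: matrix_scalar_ac sq scalar_matrix_assoc[symmetric] matrix_mul_assoc)
  qed
qed

definition sin_div :: "real \<Rightarrow> real \<Rightarrow> real" where
  "sin_div \<rho> t = (if \<rho> = 0 then t else sin (\<rho> * t) / \<rho>)"

lemma mexp_scaleR_square_neg:
  assumes sq: "N ** N = (- \<rho>\<^sup>2) *\<^sub>R mat 1"
  shows "mexp (t *\<^sub>R N) = cos (\<rho> * t) *\<^sub>R mat 1 + sin_div \<rho> t *\<^sub>R N"
proof -
  define c where "c = - (\<rho> * t)\<^sup>2"
  have sq_t: "(t *\<^sub>R N) ** (t *\<^sub>R N) = c *\<^sub>R mat 1"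
    by (simp add: c_def matrix_scalar_ac scalar_matrix_assoc[symmetric] sq power_mult_distrib power2_eq_square)
  define xs where "xs n = (if even n then c ^ (n div 2) / fact n else 0)" for n
  define ys where "ys n = (if even n then 0 else t * c ^ (n div 2) / fact n)" for n
  have series_term: "(1 / fact n) *\<^sub>R mpow (t *\<^sub>R N) n = xs n *\<^sub>R mat 1 + ys n *\<^sub>R N" for n
    by (simp add: mpow_square_scalar[OF sq_t] xs_def ys_def)
  have xs_eq: "xs n = cos_coeff n * (\<rho> * t) ^ n" for n
  proof (cases "even n")
    case True
    then obtain k where "n = 2 * k" by blast
    then show ?thesis
      by (simp add: xs_def c_def cos_coeff_def power_mult power_minus[of "(\<rho> * t)\<^sup>2"])
  qed (simp add: xs_def cos_coeff_def)
  have xs_sums: "xs sums cos (\<rho> * t)"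
    unfolding xs_eq[abs_def] using cos_converges[of "\<rho> * t"] by simp
  have ys_sums: "ys sums sin_div \<rho> t"
  proof (cases "\<rho> = 0")
    case True
    then have "ys = (\<lambda>n. if n = 1 then t else 0)"
      by (auto simp: fun_eq_iff ys_def c_def elim!: oddE)
    then show ?thesis using sums_single[of 1 "\<lambda>_. t"] True by (simp add: sin_div_def)
  next
    case False
    have ys_eq: "ys n = sin_coeff n * (\<rho> * t) ^ n / \<rho>" for n
    proof (cases "even n")
      case False
      then obtain k where "n = 2 * k + 1" by (blast elim: oddE)
      then show ?thesis using \<open>\<rho> \<noteq> 0\<close>
        by (simp add: ys_def c_def sin_coeff_def power_mult power_minus[of "(\<rho> * t)\<^sup>2"])
    qed (simp add: ys_def sin_coeff_def)
    show ?thesis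
      unfolding ys_eq[abs_def] using sums_divide[OF sin_converges[of "\<rho> * t"], of \<rho>] False by (simp add: sin_div_def)
  qed
  have "(\<lambda>n. (1 / fact n) *\<^sub>R mpow (t *\<^sub>R N) n)
          sums (cos (\<rho> * t) *\<^sub>R mat 1 + sin_div \<rho> t *\<^sub>R N)"
    unfolding series_term by (intro sums_add sums_scaleR_left xs_sums ys_sums)
  then show ?thesis
    unfolding mexp_def by (rule sums_unique[symmetric])
qed

lemma cmat2_lincomb_mult:
  fixes N :: cmat2
  assumes sq: "N ** N = (- \<rho>\<^sup>2) *\<^sub>R mat 1"
  shows "(a *\<^sub>R mat 1 + b *\<^sub>R N) ** (c *\<^sub>R mat 1 + d *\<^sub>R N)
    = (a * c - \<rho>\<^sup>2 * b * d) *\<^sub>R mat 1 + (a * d + b * c) *\<^sub>R N"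
  by (simp add: matrix_add_ldistrib matrix_add_rdistrib matrix_scalar_ac
      scalar_matrix_assoc[symmetric] sq algebra_simps)

lemma mexp_add_scaleR:
  assumes sq: "N ** N = (- \<rho>\<^sup>2) *\<^sub>R mat 1"
  shows "mexp (s *\<^sub>R N) ** mexp (t *\<^sub>R N) = mexp ((s + t) *\<^sub>R N)"
proof -
  have cos: "cos (\<rho> * s) * cos (\<rho> * t) - \<rho>\<^sup>2 * sin_div \<rho> s * sin_div \<rho> t = cos (\<rho> * (s + t))"
    by (cases "\<rho> = 0") (auto simp: sin_div_def cos_add distrib_left power2_eq_square)
  have sin: "cos (\<rho> * s) * sin_div \<rho> t + sin_div \<rho> s * cos (\<rho> * t) = sin_div \<rho> (s + t)"
    by (cases "\<rho> = 0") (auto simp: sin_div_def sin_add distrib_left field_simps)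
  show ?thesis
    unfolding mexp_scaleR_square_neg[OF sq] cmat2_lincomb_mult[OF sq] cos sin ..
qed

lemma mexp_intertwine:
  assumes "M ** M = (- \<rho>\<^sup>2) *\<^sub>R mat 1" and "M' ** M' = (- \<rho>\<^sup>2) *\<^sub>R mat 1"
    and "D ** M' = M ** D"
  shows "D ** mexp (t *\<^sub>R M') = mexp (t *\<^sub>R M) ** D"
  unfolding mexp_scaleR_square_neg[OF assms(1)] mexp_scaleR_square_neg[OF assms(2)]
  by (simp add: matrix_add_ldistrib matrix_add_rdistrib matrix_scalar_ac
      scalar_matrix_assoc[symmetric] assms(3))

lemma mexp_su2_z:
  "mexp (\<phi> *\<^sub>R su2 0 0 1) = cos (\<phi> / 2) *\<^sub>R mat 1 + (2 * sin (\<phi> / 2)) *\<^sub>R su2 0 0 1"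
  using mexp_scaleR_square_neg[OF su2_square[of 0 0 1], of \<phi>] by (simp add: sin_div_def)

lemma su2_z_rotation:
  "mexp ((- \<theta>) *\<^sub>R su2 0 0 1) ** su2 (x * cos \<theta> - y * sin \<theta>) (x * sin \<theta> + y * cos \<theta>) z
     = su2 x y z ** mexp ((- \<theta>) *\<^sub>R su2 0 0 1)"
proof -
  define h where "h = \<theta> / 2"
  have \<theta>: "\<theta> = 2 * h" and half: "- (2 * h) / 2 = - h" by (simp_all add: h_def)
  show ?thesis
    unfolding \<theta> mexp_su2_z half sin_double cos_double
    apply (simp add: cmat2_simps field_simps power2_eq_square)
    using sin_cos_squared_add[of h] by algebra
qed

lemma mexp_su2_z_rotation:
  "mexp ((- \<theta>) *\<^sub>R su2 0 0 1) ** mexp (s *\<^sub>R su2 (x * cos \<theta> - y * sin \<theta>) (x * sin \<theta> + y * cos \<theta>) z)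
     = mexp (s *\<^sub>R su2 x y z) ** mexp ((- \<theta>) *\<^sub>R su2 0 0 1)"
proof -
  have "(x * cos \<theta> - y * sin \<theta>)\<^sup>2 + (x * sin \<theta> + y * cos \<theta>)\<^sup>2 + z\<^sup>2 = x\<^sup>2 + y\<^sup>2 + z\<^sup>2"
    using sin_cos_squared_add[of \<theta>] by algebra
  then have "su2 (x * cos \<theta> - y * sin \<theta>) (x * sin \<theta> + y * cos \<theta>) z
      ** su2 (x * cos \<theta> - y * sin \<theta>) (x * sin \<theta> + y * cos \<theta>) z
      = (- (sqrt (x\<^sup>2 + y\<^sup>2 + z\<^sup>2) / 2)\<^sup>2) *\<^sub>R mat 1"
    by (simp only: su2_square)
  then show ?thesis
    by (rule mexp_intertwine[OF su2_square _ su2_z_rotation])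
qed

lemma su2_lincomb_SU2R:
  assumes "a\<^sup>2 + b\<^sup>2 * ((x\<^sup>2 + y\<^sup>2 + z\<^sup>2) / 4) = 1"
  shows "(a *\<^sub>R mat 1 + b *\<^sub>R su2 x y z, r) \<in> carrier SU2R"
  using assms by (simp add: SU2R_def cmat2_simps conj_transpose_def det_2 field_simps power2_eq_square)

lemma lexp_su2_carrier: "lexp (su2 x y z, r) \<in> carrier SU2R"
proof -
  define \<rho> where "\<rho> = sqrt (x\<^sup>2 + y\<^sup>2 + z\<^sup>2) / 2"
  have \<rho>_sq: "(x\<^sup>2 + y\<^sup>2 + z\<^sup>2) / 4 = \<rho>\<^sup>2"
    by (simp add: \<rho>_def power_divide)
  have "(cos \<rho>)\<^sup>2 + (sin_div \<rho> 1)\<^sup>2 * \<rho>\<^sup>2 = 1"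
    by (simp add: sin_div_def power_divide)
  then have "(cos \<rho> *\<^sub>R mat 1 + sin_div \<rho> 1 *\<^sub>R su2 x y z, r) \<in> carrier SU2R"
    by (intro su2_lincomb_SU2R) (simp only: \<rho>_sq)
  then show ?thesis
    using mexp_scaleR_square_neg[OF su2_square, of 1 x y z] by (simp add: lexp_def \<rho>_def)
qed

lemma conj_transpose_mult: "conj_transpose (A ** B) = conj_transpose B ** conj_transpose A"
  by (simp add: cmat2_eq_iff cmat2_mult_nth conj_transpose_def mult.commute)

lemma SU2R_mult: "(A, r) \<otimes>\<^bsub>SU2R\<^esub> (B, s) = (A ** B, r + s)"
  by (simp add: SU2R_def)

lemma SU2R_mult_closed:
  assumes "X \<in> carrier SU2R" and "Y \<in> carrier SU2R"
  shows "X \<otimes>\<^bsub>SU2R\<^esub> Y \<in> carrier SU2R"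
proof -
  obtain A r B s where X: "X = (A, r)" and Y: "Y = (B, s)" by fastforce
  have "conj_transpose (A ** B) ** (A ** B) = conj_transpose B ** (conj_transpose A ** A) ** B"
    by (simp add: conj_transpose_mult matrix_mul_assoc)
  then show ?thesis
    using assms by (simp add: X Y SU2R_mult SU2R_def det_mul)
qed

lemma frame_e_lincomb:
  "a1 *\<^sub>R frame_e i 1 + a2 *\<^sub>R frame_e i 2 + a3 *\<^sub>R frame_e i 3 + b *\<^sub>R frame_e i 4
     = (su2 a1 a3 (if i = 1 then b - a2 else b), a2)"
  by (simp add: frame_e_def su2_def E1_def E2_def E3_def E4_def algebra_simps)

lemma frame_e_4: "frame_e i 4 = (su2 0 0 1, 0)"
  by (simp add: frame_e_def su2_def E3_def)

lemma gamma_eq: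
  "gamma G \<pi> i a1 a2 a3 b t =
     \<pi> (lexp (t *\<^sub>R su2 a1 a3 (if i = 1 then b - a2 else b), t * a2))
       \<otimes>\<^bsub>G\<^esub> \<pi> (lexp ((- t * b) *\<^sub>R su2 0 0 1, 0))"
  unfolding gamma_def frame_e_lincomb by (simp add: frame_e_4)

lemma gamma_hom:
  assumes "\<pi> \<in> hom SU2R G"
  shows "gamma G \<pi> i a1 a2 a3 b t = \<pi> (gamma SU2R id i a1 a2 a3 b t)"
  unfolding gamma_eq[of G] gamma_eq[of SU2R]
  by (simp add: hom_mult[OF assms] lexp_su2_carrier scaleR_su2)

lemma gamma_SU2R_carrier: "gamma SU2R id i a1 a2 a3 b t \<in> carrier SU2R"
  unfolding gamma_eq by (simp add: SU2R_mult_closed lexp_su2_carrier scaleR_su2)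

lemma gamma_SU2R_mult_rotated:
  "gamma SU2R id i a1 a2 a3 b t0 \<otimes>\<^bsub>SU2R\<^esub>
     gamma SU2R id i (a1 * cos (b * t0) - a3 * sin (b * t0)) a2
                     (a1 * sin (b * t0) + a3 * cos (b * t0)) b s
   = gamma SU2R id i a1 a2 a3 b (t0 + s)"
proof -
  define c where "c = (if i = 1 then b - a2 else b)"
  define N where "N = su2 a1 a3 c"
  define N' where "N' = su2 (a1 * cos (b * t0) - a3 * sin (b * t0)) (a1 * sin (b * t0) + a3 * cos (b * t0)) c"
  define R where "R u = mexp ((- u * b) *\<^sub>R su2 0 0 1)" for u
  have gamma_SU2R: "gamma SU2R id i x a2 y b u = (mexp (u *\<^sub>R su2 x y c) ** R u, u * a2)" for x y u
    unfolding gamma_eq c_def R_def by (simp add: lexp_def SU2R_mult)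
  have rotate: "R t0 ** mexp (s *\<^sub>R N') = mexp (s *\<^sub>R N) ** R t0"
    using mexp_su2_z_rotation[of "b * t0" s a1 a3 c] by (simp add: N_def N'_def R_def mult.commute)
  have R_add: "R t0 ** R s = R (t0 + s)"
    using mexp_add_scaleR[OF su2_square[of 0 0 1], of "- t0 * b" "- s * b"]
    by (simp add: R_def algebra_simps)
  have "(mexp (t0 *\<^sub>R N) ** R t0) ** (mexp (s *\<^sub>R N') ** R s)
      = mexp (t0 *\<^sub>R N) ** (R t0 ** mexp (s *\<^sub>R N')) ** R s"
    by (simp add: matrix_mul_assoc)
  also have "\<dots> = (mexp (t0 *\<^sub>R N) ** mexp (s *\<^sub>R N)) ** (R t0 ** R s)"
    by (simp add: rotate matrix_mul_assoc)
  also have "\<dots> = mexp ((t0 + s) *\<^sub>R N) ** R (t0 + s)"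
    by (simp add: mexp_add_scaleR[OF su2_square] N_def R_add)
  finally show ?thesis
    by (simp add: gamma_SU2R SU2R_mult N_def N'_def distrib_right)
qed

theorem proposition3:
  fixes G :: "('g, 'm) monoid_scheme" and \<pi> :: "cmat2 \<times> real \<Rightarrow> 'g"
    and i :: nat and a1 a2 a3 b t0 t :: real
  assumes "group G" and "\<pi> \<in> hom SU2R G"
    and "i \<in> {1, 2}"
    and "a1\<^sup>2 + a2\<^sup>2 + a3\<^sup>2 = 1"
  shows "inv\<^bsub>G\<^esub> (gamma G \<pi> i a1 a2 a3 b t0) \<otimes>\<^bsub>G\<^esub> gamma G \<pi> i a1 a2 a3 b t =
         gamma G \<pi> i (a1 * cos (b * t0) - a3 * sin (b * t0)) a2
                     (a1 * sin (b * t0) + a3 * cos (b * t0)) b (t - t0)"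
proof -
  interpret G: group G by fact
  note hom = \<open>\<pi> \<in> hom SU2R G\<close>
  have in_G: "gamma G \<pi> i x a2 y b u \<in> carrier G" for x y u
    by (simp add: gamma_hom[OF hom] hom_in_carrier[OF hom] gamma_SU2R_carrier)
  have "gamma G \<pi> i a1 a2 a3 b t =
        gamma G \<pi> i a1 a2 a3 b t0 \<otimes>\<^bsub>G\<^esub>
        gamma G \<pi> i (a1 * cos (b * t0) - a3 * sin (b * t0)) a2
                    (a1 * sin (b * t0) + a3 * cos (b * t0)) b (t - t0)"
    unfolding gamma_hom[OF hom]
      hom_mult[OF hom gamma_SU2R_carrier gamma_SU2R_carrier, symmetric]
      gamma_SU2R_mult_rotated by simp
  then show ?thesis
    using G.inv_solve_left' in_G by blast
qed

end
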